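(* Let $f$ be an affine signal flow graph with initial state $f_0$. For every finite computation $t\vdash f_0\xrightarrow[v_t]{u_t}f_1\xrightarrow[v_{t+1}]{u_{t+1}}\cdots\xrightarrow[v_{t+n-1}]{u_{t+n-1}}f_n$ (starting at time $t\le 0$) there exists a trajectory $\sigma\in[\![f]\!]_{op}$ such that $\sigma(i)=(u_i,v_i)$ for all $t\le i\le t+n-1$.
   Context: Fix a field $k$. Circuits: terms built from generators with sorts $(n,m)$: copier $\Delta:(1,2)$, discard $!:(1,0)$, amplifier $\mathsf{s}_r:(1,1)$ ($r\in k$), register $\mathsf{x}:(1,1)$, adder $+:(2,1)$, zero $0:(0,1)$, one $\mathbf{1}:(0,1)$; mirror images $\Delta^{op}:(2,1)$, $!^{op}:(0,1)$, $\mathsf{s}_r^{op}$, $\mathsf{x}^{op}:(1,1)$, $+^{op}:(1,2)$, $0^{op}:(1,0)$, $\mathbf{1}^{op}:(1,0)$; $\mathrm{id}_0:(0,0),\mathrm{id}_1:(1,1),\mathrm{sw}:(2,2)$; closed under $;$ and $\oplus$. Feedback: for $c:(n+1,m+1)$, $\mathrm{Tr}(c):(n,m)$ connects the last right port of $c$ to its last left port through a register $\mathsf x$, the wire being bent with the cup $!^{op};\Delta:(0,2)$ and the cap $\Delta^{op};!:(2,0)$. Affine signal flow graphs are the circuits in the smallest class containing $\Delta,!,\mathsf s_r,\mathsf x,+,0,\mathbf 1,\mathrm{id}_0,\mathrm{id}_1,\mathrm{sw}$ and closed under $;$, $\oplus$ and $\mathrm{Tr}$. Operational semantics: a state is a circuit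 with a value of $k$ in each register; initial state stores $0$ everywhere. Transitions $t\vdash c\xrightarrow[w]{v}c'$ at time $t\in\mathbb Z$ (moving to time $t+1$): $\Delta$: $a/(a,a)$; $!$: $a/\bullet$; $+$: $(a,b)/a+b$; $0$: $\bullet/0$; $\mathsf s_r$: $a/ra$; $\mathsf x$ storing $b$: $a/b$, then stores $a$; $\mathbf 1$: $\bullet/1$ if $t=0$, $\bullet/0$ otherwise; mirrored generators: same with left/right exchanged; $\mathrm{id}_1$: $a/a$; $\mathrm{sw}$: $(a,b)/(b,a)$; $\mathrm{id}_0$: $\bullet/\bullet$; in $c;d$ both components move at the same time agreeing on the shared middle label; in $c\oplus d$ both move with labels concatenated. A computation starting at $t\le0$ is a sequence of transitions from the initial state at times $t,t+1,\dots$. An $(n,m)$-trajectory is $\sigma:\mathbb Z\to k^n\times k^m$ equal to $(0,0)$ at all sufficiently small indices. $[\![f]\!]_{op}$ is the set of trajectories of infinite computations of $f$: $\sigma(i)=(u_i,v_i)$ (the labels of the transition at time $i$) for $i\ge t$, and $(0,0)$ for $i<t$. *)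

theory Defs
  imports Main
begin

(* Circuit terms over a field 'a.  A register carries its stored value, so a
   term of this datatype is a *state* of a circuit. *)
datatype 'a circ =
    Copy | Disc | Amp 'a | Reg 'a | Add | Zero | One
  | CopyOp | DiscOp | AmpOp 'a | RegOp 'a | AddOp | ZeroOp | OneOp
  | Id0 | Id1 | Sw
  | Seq "'a circ" "'a circ"
  | Par "'a circ" "'a circ"

primrec init :: "'a::zero circ \<Rightarrow> 'a circ" where
  "init Copy = Copy" | "init Disc = Disc" | "init (Amp r) = Amp r"
| "init (Reg b) = Reg 0" | "init Add = Add" | "init Zero = Zero" | "init One = One"
| "init CopyOp = CopyOp" | "init DiscOp = DiscOp" | "init (AmpOp r) = AmpOp r"
| "init (RegOp b) = RegOp 0" | "init AddOp = AddOp" | "init ZeroOp = ZeroOp"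
| "init OneOp = OneOp" | "init Id0 = Id0" | "init Id1 = Id1" | "init Sw = Sw"
| "init (Seq c d) = Seq (init c) (init d)"
| "init (Par c d) = Par (init c) (init d)"

primrec idn :: "nat \<Rightarrow> 'a circ" where
  "idn 0 = Id0"
| "idn (Suc n) = Par Id1 (idn n)"

definition cup :: "'a circ" where "cup = Seq DiscOp Copy"
definition cap :: "'a circ" where "cap = Seq CopyOp Disc"

(* feedback Tr(c) : (n,m) for c : (n+1,m+1): last right port of c goes through
   a register (initially storing 0) and is bent back to the last left port *)
definition Tr :: "nat \<Rightarrow> nat \<Rightarrow> 'a::zero circ \<Rightarrow> 'a circ" where
  "Tr n m c =
     Seq (Seq (Seq (Par (idn n) cup) (Par c Id1))
              (Par (idn m) (Par (Reg 0) Id1)))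
         (Par (idn m) cap)"

inductive asfg :: "'a::field circ \<Rightarrow> nat \<Rightarrow> nat \<Rightarrow> bool" where
  "asfg Copy 1 2"
| "asfg Disc 1 0"
| "asfg (Amp r) 1 1"
| "asfg (Reg 0) 1 1"
| "asfg Add 2 1"
| "asfg Zero 0 1"
| "asfg One 0 1"
| "asfg Id0 0 0"
| "asfg Id1 1 1"
| "asfg Sw 2 2"
| "asfg c n k \<Longrightarrow> asfg d k m \<Longrightarrow> asfg (Seq c d) n m"
| "asfg c n1 m1 \<Longrightarrow> asfg d n2 m2 \<Longrightarrow> asfg (Par c d) (n1 + n2) (m1 + m2)"
| "asfg c (Suc n) (Suc m) \<Longrightarrow> asfg (Tr n m c) n m"

(* transitions  t |- c --u/v--> c'  (left label u, right label v) *)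
inductive step :: "int \<Rightarrow> 'a::field circ \<Rightarrow> 'a list \<Rightarrow> 'a list \<Rightarrow> 'a circ \<Rightarrow> bool" where
  "step t Copy [a] [a, a] Copy"
| "step t Disc [a] [] Disc"
| "step t Add [a, b] [a + b] Add"
| "step t Zero [] [0] Zero"
| "step t (Amp r) [a] [r * a] (Amp r)"
| "step t (Reg b) [a] [b] (Reg a)"
| "step t One [] [if t = 0 then 1 else 0] One"
| "step t CopyOp [a, a] [a] CopyOp"
| "step t DiscOp [] [a] DiscOp"
| "step t AddOp [a + b] [a, b] AddOp"
| "step t ZeroOp [0] [] ZeroOp"
| "step t (AmpOp r) [r * a] [a] (AmpOp r)"
| "step t (RegOp b) [b] [a] (RegOp a)"
| "step t OneOp [if t = 0 then 1 else 0] [] OneOp"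
| "step t Id0 [] [] Id0"
| "step t Id1 [a] [a] Id1"
| "step t Sw [a, b] [b, a] Sw"
| "step t c u w c' \<Longrightarrow> step t d w v d' \<Longrightarrow> step t (Seq c d) u v (Seq c' d')"
| "step t c u1 v1 c' \<Longrightarrow> step t d u2 v2 d' \<Longrightarrow>
     step t (Par c d) (u1 @ u2) (v1 @ v2) (Par c' d')"

definition trajectory :: "nat \<Rightarrow> nat \<Rightarrow> (int \<Rightarrow> 'a::zero list \<times> 'a list) \<Rightarrow> bool" where
  "trajectory n m \<sigma> \<longleftrightarrow>
     (\<forall>i. length (fst (\<sigma> i)) = n \<and> length (snd (\<sigma> i)) = m) \<and>
     (\<exists>N. \<forall>i<N. \<sigma> i = (replicate n 0, replicate m 0))"

definition opsem :: "nat \<Rightarrow> nat \<Rightarrow> 'a::field circ \<Rightarrow> (int \<Rightarrow> 'a list \<times> 'a list) set" where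
  "opsem n m f = {\<sigma>. trajectory n m \<sigma> \<and>
     (\<exists>t::int. t \<le> 0 \<and> (\<exists>g :: nat \<Rightarrow> 'a circ.
        g 0 = init f \<and>
        (\<forall>j. step (t + int j) (g j) (fst (\<sigma> (t + int j))) (snd (\<sigma> (t + int j))) (g (Suc j))) \<and>
        (\<forall>i<t. \<sigma> i = (replicate n 0, replicate m 0))))}"

end

(* The states reachable from the initial state of an affine signal flow graph of sort (n,m) are
   again built like the graph, except that registers may hold arbitrary values.  Each such state
   can fire on every input of length n, every transition has an output of length m and leads to
   another such state.  For a feedback Tr(c), the cup/cap wiring collapses to the rule "feed the
   register's content to the last input of c and store the last output of c".  So any finite
   computation can be continued forever on zero inputs, and its labels form the required
   trajectory. *)

theory Submission
  imports Defs
begin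

definition Tr_state :: "nat \<Rightarrow> nat \<Rightarrow> 'a circ \<Rightarrow> 'a \<Rightarrow> 'a circ" where
  "Tr_state n m c s =
     Seq (Seq (Seq (Par (idn n) cup) (Par c Id1))
              (Par (idn m) (Par (Reg s) Id1)))
         (Par (idn m) cap)"

lemma Tr_state_zero: "Tr_state n m c 0 = Tr n m c"
  by (simp add: Tr_state_def Tr_def)

inductive asfg_state :: "'a::field circ \<Rightarrow> nat \<Rightarrow> nat \<Rightarrow> bool" where
  "asfg_state Copy 1 2"
| "asfg_state Disc 1 0"
| "asfg_state (Amp r) 1 1"
| "asfg_state (Reg b) 1 1"
| "asfg_state Add 2 1"
| "asfg_state Zero 0 1"
| "asfg_state One 0 1"
| "asfg_state Id0 0 0"
| "asfg_state Id1 1 1"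
| "asfg_state Sw 2 2"
| "asfg_state c n k \<Longrightarrow> asfg_state d k m \<Longrightarrow> asfg_state (Seq c d) n m"
| "asfg_state c n1 m1 \<Longrightarrow> asfg_state d n2 m2 \<Longrightarrow> asfg_state (Par c d) (n1 + n2) (m1 + m2)"
| "asfg_state c (Suc n) (Suc m) \<Longrightarrow> asfg_state (Tr_state n m c s) n m"

lemma init_idn [simp]: "init (idn n) = idn n"
  by (induction n) auto

lemma asfg_state_init: "asfg f n m \<Longrightarrow> asfg_state (init f) n m"
proof (induction rule: asfg.induct)
  case (13 c n m)
  then show ?case
    using asfg_state.intros(13)[of "init c" n m 0]
    by (simp add: Tr_state_zero [symmetric] Tr_state_def Tr_def cup_def cap_def)
qed (auto intro: asfg_state.intros[simplified])

inductive_cases step_SeqE: "step t (Seq c d) u v e"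
inductive_cases step_ParE: "step t (Par c d) u v e"
inductive_cases step_Id0E: "step t Id0 u v e"
inductive_cases step_Id1E: "step t Id1 u v e"

lemma step_Seq_iff:
  "step t (Seq c d) u v e \<longleftrightarrow> (\<exists>w c' d'. step t c u w c' \<and> step t d w v d' \<and> e = Seq c' d')"
  by (blast elim: step_SeqE intro: step.intros)

lemma step_Id1_iff: "step t Id1 u v e \<longleftrightarrow> (\<exists>a. u = [a] \<and> v = [a] \<and> e = Id1)"
  by (auto elim: step_Id1E intro: step.intros)

lemma step_idn_iff: "step t (idn n) u v e \<longleftrightarrow> u = v \<and> length u = n \<and> e = idn n"
proof (induction n arbitrary: u v e)
  case 0
  show ?case by (auto elim: step_Id0E intro: step.intros)
next
  case (Suc n)
  show ?case
  proof
    assume "step t (idn (Suc n)) u v e"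
    then show "u = v \<and> length u = Suc n \<and> e = idn (Suc n)"
      using Suc by (auto elim!: step_ParE step_Id1E)
  next
    assume "u = v \<and> length u = Suc n \<and> e = idn (Suc n)"
    then obtain a w where "u = [a] @ w" "v = [a] @ w" "length w = n" "e = Par Id1 (idn n)"
      by (cases u) auto
    then show "step t (idn (Suc n)) u v e"
      using step.intros(19)[OF step.intros(16) Suc[THEN iffD2]] by simp
  qed
qed

lemma step_Par_idn_iff:
  "step t (Par (idn k) d) u v e \<longleftrightarrow>
     (\<exists>x u' v' d'. u = x @ u' \<and> v = x @ v' \<and> length x = k \<and> step t d u' v' d' \<and> e = Par (idn k) d')"
proof
  assume "step t (Par (idn k) d) u v e"
  then show "\<exists>x u' v' d'. u = x @ u' \<and> v = x @ v' \<and> length x = k \<and> step t d u' v' d' \<and>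
      e = Par (idn k) d'"
    by (fastforce elim!: step_ParE simp: step_idn_iff)
qed (auto intro: step.intros(19) simp: step_idn_iff)

lemma step_Par_Id1_iff:
  "step t (Par c Id1) u v e \<longleftrightarrow>
     (\<exists>a u' v' c'. u = u' @ [a] \<and> v = v' @ [a] \<and> step t c u' v' c' \<and> e = Par c' Id1)"
  by (auto elim!: step_ParE simp: step_Id1_iff intro: step.intros)

inductive_cases step_CopyE: "step t Copy u v e"
inductive_cases step_DiscE: "step t Disc u v e"
inductive_cases step_CopyOpE: "step t CopyOp u v e"
inductive_cases step_DiscOpE: "step t DiscOp u v e"

lemma step_cup_iff: "step t cup u v e \<longleftrightarrow> (\<exists>a. u = [] \<and> v = [a, a] \<and> e = cup)"
  unfolding cup_def by (auto elim!: step_SeqE step_DiscOpE step_CopyE intro: step.intros)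

lemma step_cap_iff: "step t cap u v e \<longleftrightarrow> (\<exists>a. u = [a, a] \<and> v = [] \<and> e = cap)"
  unfolding cap_def by (auto elim!: step_SeqE step_CopyOpE step_DiscE intro: step.intros)

inductive_cases step_RegE: "step t (Reg s) u v e"

lemma step_Reg_iff: "step t (Reg s) u v e \<longleftrightarrow> (\<exists>b. u = [b] \<and> v = [s] \<and> e = Reg b)"
  by (auto elim: step_RegE intro: step.intros)

lemma step_Tr_state_iff:
  "step t (Tr_state n m c s) u v e \<longleftrightarrow>
     length u = n \<and> length v = m \<and>
     (\<exists>b c'. step t c (u @ [s]) (v @ [b]) c' \<and> e = Tr_state n m c' b)"
  (is "?step \<longleftrightarrow> ?feedback")
proof
  assume ?step
  then show ?feedback
    unfolding Tr_state_def step_Seq_iff step_Par_idn_iff step_Par_Id1_iff step_Reg_iff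
      step_cup_iff step_cap_iff
    by auto
next
  assume ?feedback
  then show ?step
    unfolding Tr_state_def step_Seq_iff step_Par_idn_iff step_Par_Id1_iff step_Reg_iff
      step_cup_iff step_cap_iff
    by force
qed

lemma asfg_state_step:
  "asfg_state c n m \<Longrightarrow> step t c u v e \<Longrightarrow> length u = n \<and> length v = m \<and> asfg_state e n m"
proof (induction arbitrary: u v e rule: asfg_state.induct)
  case (11 c n k d m)
  then obtain w c' d' where "step t c u w c'" "step t d w v d'" "e = Seq c' d'"
    by (auto simp: step_Seq_iff)
  with "11.IH" show ?case by (metis asfg_state.intros(11))
next
  case (12 c n1 m1 d n2 m2)
  then show ?case by (auto elim!: step_ParE intro: asfg_state.intros)
next
  case (13 c n m s)
  then show ?case by (auto simp: step_Tr_state_iff intro: asfg_state.intros)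
qed (fastforce elim: step.cases intro: asfg_state.intros)+

lemma asfg_state_step_exists: "asfg_state c n m \<Longrightarrow> length u = n \<Longrightarrow> \<exists>v c'. step t c u v c'"
proof (induction arbitrary: u rule: asfg_state.induct)
  case (11 c n k d m)
  then obtain w c' where "step t c u w c'" by blast
  moreover from this have "length w = k" using 11 asfg_state_step by blast
  ultimately show ?case using 11 by (metis step.intros(18))
next
  case (12 c n1 m1 d n2 m2)
  then obtain v1 c' v2 d' where "step t c (take n1 u) v1 c'" "step t d (drop n1 u) v2 d'"
    by (metis length_take length_drop min.absorb2 le_add1 add_diff_cancel_left')
  then show ?case by (metis step.intros(19) append_take_drop_id)
next
  case (13 c n m s)
  then obtain r c' where "step t c (u @ [s]) r c'" by fastforce
  moreover from this have "length r = Suc m" using 13 asfg_state_step by blast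
  then obtain v b where "r = v @ [b]" "length v = m"
    by (metis append_butlast_last_id length_butlast diff_Suc_1 list.size(3) nat.distinct(1))
  ultimately show ?case using 13 by (auto simp: step_Tr_state_iff)
qed (auto intro: step.intros simp: length_Suc_conv numeral_2_eq_2)

lemma asfg_state_computation_extends:
  assumes "asfg_state (g 0) n m"
    and "\<forall>j<N. step (t + int j) (g j) (u j) (v j) (g (Suc j))"
  obtains G U V where "G 0 = g 0" and "\<And>j. asfg_state (G j) n m"
    and "\<And>j. step (t + int j) (G j) (U j) (V j) (G (Suc j))"
    and "\<And>j. j < N \<Longrightarrow> U j = u j \<and> V j = v j"
proof -
  \<comment> \<open>Follow g for N steps, then feed zeros.\<close>
  define P where "P j c \<longleftrightarrow> asfg_state c n m \<and> (j \<le> N \<longrightarrow> c = g j)" for j c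
  define Q where
    "Q j c c' \<longleftrightarrow> (\<exists>a b. step (t + int j) c a b c' \<and> (j < N \<longrightarrow> a = u j \<and> b = v j))" for j c c'
  have "\<exists>c'. P (Suc j) c' \<and> Q j c c'" if current: "P j c" for j c
  proof (cases "j < N")
    case True
    then show ?thesis
      using current assms(2) asfg_state_step unfolding P_def Q_def by fastforce
  next
    case False
    obtain b c' where "step (t + int j) c (replicate n 0) b c'"
      using current asfg_state_step_exists unfolding P_def by (metis length_replicate)
    then show ?thesis
      using current False asfg_state_step unfolding P_def Q_def by fastforce
  qed
  moreover have "P 0 (g 0)" using assms(1) by (simp add: P_def)
  ultimately obtain G where G: "\<And>j. P j (G j) \<and> Q j (G j) (G (Suc j))"
    using dependent_nat_choice[of P Q] by blast
  then obtain U V where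
    "\<And>j. step (t + int j) (G j) (U j) (V j) (G (Suc j)) \<and> (j < N \<longrightarrow> U j = u j \<and> V j = v j)"
    unfolding Q_def by metis
  with G show thesis by (intro that[of G U V]) (auto simp: P_def)
qed

theorem proposition9:
  fixes f :: "'a::field circ" and n m :: nat
  assumes "asfg f n m"
    and "t \<le> 0"
    and "g 0 = init f"
    and "\<forall>j<N. step (t + int j) (g j) (u (t + int j)) (v (t + int j)) (g (Suc j))"
  shows "\<exists>\<sigma> \<in> opsem n m f. \<forall>i. t \<le> i \<and> i \<le> t + int N - 1 \<longrightarrow> \<sigma> i = (u i, v i)"
proof -
  obtain G U V where G0: "G 0 = init f" and G: "\<And>j. asfg_state (G j) n m"
    and run: "\<And>j. step (t + int j) (G j) (U j) (V j) (G (Suc j))"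
    and prefix: "\<And>j. j < N \<Longrightarrow> U j = u (t + int j) \<and> V j = v (t + int j)"
    using asfg_state_computation_extends[of g n m N t "\<lambda>j. u (t + int j)" "\<lambda>j. v (t + int j)"]
      asfg_state_init[OF assms(1)] assms(3,4) by metis
  define \<sigma> where
    "\<sigma> i = (if i < t then (replicate n 0, replicate m 0) else (U (nat (i - t)), V (nat (i - t))))" for i
  have "\<forall>j. step (t + int j) (G j) (fst (\<sigma> (t + int j))) (snd (\<sigma> (t + int j))) (G (Suc j))"
    using run by (simp add: \<sigma>_def)
  moreover have "\<forall>i<t. \<sigma> i = (replicate n 0, replicate m 0)"
    by (simp add: \<sigma>_def)
  moreover have "trajectory n m \<sigma>"
    unfolding trajectory_def \<sigma>_def using asfg_state_step[OF G run] by auto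
  ultimately have "\<sigma> \<in> opsem n m f"
    unfolding opsem_def using assms(2) G0 by blast
  moreover have "\<sigma> i = (u i, v i)" if "t \<le> i" "i \<le> t + int N - 1" for i
    using prefix[of "nat (i - t)"] that by (simp add: \<sigma>_def)
  ultimately show ?thesis by blast
qed

end
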